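(* Let $k\ge2$ and $n'\ge1$. For every proper coloring of $G^*$ using at most $2k-2$ colors, either every gadget $A_1,\dots,A_{n'}$ is row-colorful or every gadget $A_1,\dots,A_{n'}$ is column-colorful (with respect to the restriction of the coloring to the gadget).
   Context: For integers $k\ge2$ and $n'\ge1$, the graph $G^*$ has node set $[n']\times[k]\times[k]$, and two nodes $(\ell,i,j)$ and $(\ell',i',j')$ are adjacent iff $|\ell-\ell'|\le 1$, $i\ne i'$ and $j\ne j'$. For $\ell\in[n']$, the gadget $A_\ell$ is the subgraph induced by $\{\ell\}\times[k]\times[k]$; its $i$-th row is $\{(\ell,i,j):j\in[k]\}$ and its $j$-th column is $\{(\ell,i,j):i\in[k]\}$. Given a proper coloring, a row (resp. column) of a gadget is colorful if its $k$ nodes receive pairwise distinct colors; a gadget is row-colorful if it has a colorful row and column-colorful if it has a colorful column. *)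

theory Defs
  imports Main
begin

definition gstar_nodes :: "nat \<Rightarrow> nat \<Rightarrow> (nat \<times> nat \<times> nat) set" where
  "gstar_nodes n' k = {1..n'} \<times> {1..k} \<times> {1..k}"

definition gstar_adj :: "nat \<times> nat \<times> nat \<Rightarrow> nat \<times> nat \<times> nat \<Rightarrow> bool" where
  "gstar_adj u v = (case u of (l, i, j) \<Rightarrow> case v of (l', i', j') \<Rightarrow>
      (l \<le> l' + 1 \<and> l' \<le> l + 1) \<and> i \<noteq> i' \<and> j \<noteq> j')"

definition proper_coloring :: "nat \<Rightarrow> nat \<Rightarrow> (nat \<times> nat \<times> nat \<Rightarrow> 'c) \<Rightarrow> bool" where
  "proper_coloring n' k c = (\<forall>u\<in>gstar_nodes n' k. \<forall>v\<in>gstar_nodes n' k.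
      gstar_adj u v \<longrightarrow> c u \<noteq> c v)"

definition row_colorful_row :: "nat \<Rightarrow> (nat \<times> nat \<times> nat \<Rightarrow> 'c) \<Rightarrow> nat \<Rightarrow> nat \<Rightarrow> bool" where
  "row_colorful_row k c l i = inj_on (\<lambda>j. c (l, i, j)) {1..k}"

definition col_colorful_col :: "nat \<Rightarrow> (nat \<times> nat \<times> nat \<Rightarrow> 'c) \<Rightarrow> nat \<Rightarrow> nat \<Rightarrow> bool" where
  "col_colorful_col k c l j = inj_on (\<lambda>i. c (l, i, j)) {1..k}"

definition row_colorful :: "nat \<Rightarrow> (nat \<times> nat \<times> nat \<Rightarrow> 'c) \<Rightarrow> nat \<Rightarrow> bool" where
  "row_colorful k c l = (\<exists>i\<in>{1..k}. row_colorful_row k c l i)"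

definition column_colorful :: "nat \<Rightarrow> (nat \<times> nat \<times> nat \<Rightarrow> 'c) \<Rightarrow> nat \<Rightarrow> bool" where
  "column_colorful k c l = (\<exists>j\<in>{1..k}. col_colorful_col k c l j)"

end

theory Submission
  imports Defs
begin

text \<open>
  Call a node repeated if its row contains another node of the same colour. In a proper colouring
  the colour of a node repeated in row \<open>i\<close> of \<open>A\<^sub>l\<close> can reappear in \<open>A\<^sub>l\<close> and in the neighbouring
  gadgets only inside row \<open>i\<close>: any node outside that row is adjacent to at least one of the two
  equally coloured nodes. Hence if \<open>A\<^sub>m\<close> is not row-colourful, choosing one repeated node per row
  gives \<open>k\<close> distinct colours, each confined to its row. A colourful row of a neighbouring gadget
  shares at most one of them and adds \<open>k - 1\<close> new colours, \<open>2k - 1\<close> in all; so non-row-colourfulness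
  spreads along the whole chain of gadgets. If moreover \<open>A\<^sub>m\<close> had no colourful column, the
  transposed argument yields \<open>k\<close> colours confined to columns, disjoint from the first \<open>k\<close>, and
  \<open>2k\<close> colours would be used.
\<close>

lemma mem_gstar_nodes [simp]:
  "(l, i, j) \<in> gstar_nodes n' k \<longleftrightarrow> l \<in> {1..n'} \<and> i \<in> {1..k} \<and> j \<in> {1..k}"
  unfolding gstar_nodes_def by auto

lemma finite_colors_used: "finite (c ` gstar_nodes n' k)"
  unfolding gstar_nodes_def by simp

definition repeated_in_row :: "nat \<Rightarrow> (nat \<times> nat \<times> nat \<Rightarrow> 'c) \<Rightarrow> nat \<Rightarrow> nat \<Rightarrow> nat \<Rightarrow> bool" where
  "repeated_in_row k c l i j \<longleftrightarrow> j \<in> {1..k} \<and> (\<exists>j'\<in>{1..k}. j' \<noteq> j \<and> c (l, i, j') = c (l, i, j))"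

lemma repeated_color_confined_to_row:
  assumes proper: "proper_coloring n' k c"
    and l: "l \<in> {1..n'}" and i: "i \<in> {1..k}" and rep: "repeated_in_row k c l i j"
    and v: "(l', i', j') \<in> gstar_nodes n' k" and near: "l \<le> l' + 1" "l' \<le> l + 1"
    and same: "c (l', i', j') = c (l, i, j)"
  shows "i' = i"
proof (rule ccontr)
  assume "i' \<noteq> i"
  obtain j2 where j2: "j2 \<in> {1..k}" "j2 \<noteq> j" "c (l, i, j2) = c (l, i, j)"
    using rep unfolding repeated_in_row_def by blast
  have j: "j \<in> {1..k}"
    using rep unfolding repeated_in_row_def by blast
  obtain jj where "jj \<in> {j, j2}" "jj \<noteq> j'"
    using j2(2) by blast
  then have "gstar_adj (l, i, jj) (l', i', j')" "c (l, i, jj) = c (l', i', j')"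
    using \<open>i' \<noteq> i\<close> near same j2(3) unfolding gstar_adj_def by auto
  moreover have "(l, i, jj) \<in> gstar_nodes n' k"
    using \<open>jj \<in> {j, j2}\<close> l i j j2(1) by auto
  ultimately show False
    using proper v unfolding proper_coloring_def by blast
qed

lemma not_row_colorful_obtains_repeated:
  assumes "\<not> row_colorful k c m"
  obtains a where "\<forall>i\<in>{1..k}. repeated_in_row k c m i (a i)"
proof -
  have "\<forall>i\<in>{1..k}. \<exists>j. repeated_in_row k c m i j"
    using assms unfolding row_colorful_def row_colorful_row_def inj_on_def repeated_in_row_def
    by (metis atLeastAtMost_iff)
  then show ?thesis
    using that by metis
qed

lemma inj_on_repeated_colors:
  assumes proper: "proper_coloring n' k c" and m: "m \<in> {1..n'}"
    and a: "\<forall>i\<in>{1..k}. repeated_in_row k c m i (a i)"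
  shows "inj_on (\<lambda>i. c (m, i, a i)) {1..k}"
proof (rule inj_onI)
  fix i i' assume i: "i \<in> {1..k}" and i': "i' \<in> {1..k}"
    and "c (m, i, a i) = c (m, i', a i')"
  moreover have "a i' \<in> {1..k}"
    using a i' unfolding repeated_in_row_def by blast
  ultimately show "i = i'"
    using repeated_color_confined_to_row[OF proper m i, of "a i" m i' "a i'"] a m by auto
qed

lemma not_row_colorful_neighbour:
  assumes proper: "proper_coloring n' k c" and few: "card (c ` gstar_nodes n' k) \<le> 2 * k - 2"
    and m: "m \<in> {1..n'}" and "\<not> row_colorful k c m"
    and l: "l \<in> {1..n'}" and near: "m \<le> l + 1" "l \<le> m + 1"
  shows "\<not> row_colorful k c l"
proof
  assume "row_colorful k c l"
  then obtain i where i: "i \<in> {1..k}" and inj_row: "inj_on (\<lambda>j. c (l, i, j)) {1..k}"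
    unfolding row_colorful_def row_colorful_row_def by blast
  obtain a where a: "\<forall>i\<in>{1..k}. repeated_in_row k c m i (a i)"
    using not_row_colorful_obtains_repeated \<open>\<not> row_colorful k c m\<close> by blast
  define R where "R = (\<lambda>i. c (m, i, a i)) ` {1..k}"
  define T where "T = (\<lambda>j. c (l, i, j)) ` {1..k}"
  have card_R: "card R = k"
    unfolding R_def using card_image[OF inj_on_repeated_colors[OF proper m a]] by simp
  have card_T: "card T = k"
    unfolding T_def using card_image[OF inj_row] by simp
  have "R \<union> T \<subseteq> c ` gstar_nodes n' k"
    using a m l i unfolding R_def T_def repeated_in_row_def by auto
  then have "card (R \<union> T) \<le> 2 * k - 2"
    using card_mono[OF finite_colors_used] few by (meson le_trans)
  have "R \<inter> T \<subseteq> {c (m, i, a i)}"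
  proof
    fix x assume "x \<in> R \<inter> T"
    then obtain i' j where i': "i' \<in> {1..k}" and j: "j \<in> {1..k}"
      and x: "x = c (m, i', a i')" "x = c (l, i, j)"
      unfolding R_def T_def by blast
    have "i = i'"
      using repeated_color_confined_to_row[OF proper m i', of "a i'" l i j] a i' i j l near x
      by auto
    then show "x \<in> {c (m, i, a i)}"
      using x by simp
  qed
  then have "card (R \<inter> T) \<le> 1"
    using card_mono[of "{c (m, i, a i)}"] by simp
  moreover have "card R + card T = card (R \<union> T) + card (R \<inter> T)"
    by (rule card_Un_Int) (simp_all add: R_def T_def)
  ultimately show False
    using card_R card_T \<open>card (R \<union> T) \<le> 2 * k - 2\<close> \<open>i \<in> {1..k}\<close>
    by auto
qed

definition transpose_gadgets :: "nat \<times> nat \<times> nat \<Rightarrow> nat \<times> nat \<times> nat" where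
  "transpose_gadgets = (\<lambda>(l, i, j). (l, j, i))"

lemma transpose_gadgets_simp [simp]: "transpose_gadgets (l, i, j) = (l, j, i)"
  unfolding transpose_gadgets_def by simp

lemma proper_coloring_transpose:
  assumes "proper_coloring n' k c"
  shows "proper_coloring n' k (c \<circ> transpose_gadgets)"
  using assms unfolding proper_coloring_def gstar_adj_def by force

lemma column_colorful_iff_row_colorful_transpose:
  "column_colorful k c l \<longleftrightarrow> row_colorful k (c \<circ> transpose_gadgets) l"
  unfolding column_colorful_def row_colorful_def col_colorful_col_def row_colorful_row_def by simp

lemma row_or_column_colorful:
  assumes proper: "proper_coloring n' k c" and few: "card (c ` gstar_nodes n' k) \<le> 2 * k - 2"
    and m: "m \<in> {1..n'}" and "k \<ge> 1"
  shows "row_colorful k c m \<or> column_colorful k c m"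
proof (rule ccontr)
  assume "\<not> (row_colorful k c m \<or> column_colorful k c m)"
  then obtain a b where a: "\<forall>i\<in>{1..k}. repeated_in_row k c m i (a i)"
    and b: "\<forall>j\<in>{1..k}. repeated_in_row k (c \<circ> transpose_gadgets) m j (b j)"
    using not_row_colorful_obtains_repeated column_colorful_iff_row_colorful_transpose by metis
  define R where "R = (\<lambda>i. c (m, i, a i)) ` {1..k}"
  define C where "C = (\<lambda>j. c (m, b j, j)) ` {1..k}"
  have card_R: "card R = k"
    unfolding R_def using card_image[OF inj_on_repeated_colors[OF proper m a]] by simp
  have "card C = k"
    using card_image[OF inj_on_repeated_colors[OF proper_coloring_transpose[OF proper] m b]]
    unfolding C_def by simp
  have "R \<inter> C = {}"
  proof (rule ccontr)
    assume "R \<inter> C \<noteq> {}"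
    then obtain i j where i: "i \<in> {1..k}" and j: "j \<in> {1..k}" and same: "c (m, i, a i) = c (m, b j, j)"
      unfolding R_def C_def by blast
    obtain i2 where i2: "i2 \<in> {1..k}" "i2 \<noteq> b j" "c (m, i2, j) = c (m, b j, j)"
      and "b j \<in> {1..k}"
      using b j unfolding repeated_in_row_def by fastforce
    have "b j = i" "i2 = i"
      using repeated_color_confined_to_row[OF proper m i, of "a i" m] a i i2 j same m
        \<open>b j \<in> {1..k}\<close> by auto
    with i2(2) show False by simp
  qed
  moreover have "R \<union> C \<subseteq> c ` gstar_nodes n' k"
    using a b m unfolding R_def C_def repeated_in_row_def by auto
  then have "card (R \<union> C) \<le> 2 * k - 2"
    using card_mono[OF finite_colors_used] few by (meson le_trans)
  ultimately show False
    using card_R \<open>card C = k\<close> card_Un_disjoint[of R C] \<open>k \<ge> 1\<close> unfolding R_def C_def by simp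
qed

lemma interval_propagation:
  fixes P :: "nat \<Rightarrow> bool"
  assumes "P m" "m \<in> {a..b}"
    and step: "\<And>l. a \<le> l \<Longrightarrow> l < b \<Longrightarrow> P l \<longleftrightarrow> P (Suc l)"
  shows "\<forall>l\<in>{a..b}. P l"
proof
  fix l assume l: "l \<in> {a..b}"
  show "P l"
  proof (cases "m \<le> l")
    case True
    then show ?thesis
      by (induction rule: dec_induct) (use assms l in auto)
  next
    case False
    then have "l \<le> m" by simp
    then show ?thesis
      by (induction rule: inc_induct) (use assms l in auto)
  qed
qed

theorem mainTheorem15:
  fixes n' k :: nat and c :: "nat \<times> nat \<times> nat \<Rightarrow> 'c"
  assumes "k \<ge> 2" and "n' \<ge> 1"
    and "proper_coloring n' k c"
    and "card (c ` gstar_nodes n' k) \<le> 2 * k - 2"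
  shows "(\<forall>l\<in>{1..n'}. row_colorful k c l) \<or> (\<forall>l\<in>{1..n'}. column_colorful k c l)"
proof (cases "\<forall>l\<in>{1..n'}. row_colorful k c l")
  case False
  then obtain m where m: "m \<in> {1..n'}" and "\<not> row_colorful k c m"
    by blast
  have "\<forall>l\<in>{1..n'}. \<not> row_colorful k c l"
  proof (rule interval_propagation[where P = "\<lambda>l. \<not> row_colorful k c l", OF _ m])
    show "\<not> row_colorful k c m" by fact
    fix l assume "1 \<le> l" "l < n'"
    then show "\<not> row_colorful k c l \<longleftrightarrow> \<not> row_colorful k c (Suc l)"
      using not_row_colorful_neighbour[OF assms(3,4), of l "Suc l"]
        not_row_colorful_neighbour[OF assms(3,4), of "Suc l" l] by auto
  qed
  then show ?thesis
    using row_or_column_colorful[OF assms(3,4)] \<open>k \<ge> 2\<close> by auto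
qed simp

end
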